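(* If an equivariant map $f:X\to Y$ of nominal sets is surjective and has orbit-finite fibres, then $f$ is safe.
   Context: Nominal sets over a countably infinite set $\mathcal V$ of names; $\mathsf{supp}(u)$ is the least finite support. An orbit is an equivalence class of $u\sim\pi\cdot u$. $f$ has orbit-finite fibres if each fibre $f^{-1}(v)$ is contained in finitely many orbits of $X$. $u\in X$ is $f$-safe if $|\mathsf{supp}(u)|=\max\{|\mathsf{supp}(v)|:v\in f^{-1}(f(u))\}$ (the maximum existing); $f$ is safe if every element of $Y$ has an $f$-safe preimage. *)

theory Defs
  imports Main "HOL-Library.Countable_Set"
begin

definition fin_perm :: "('n \<Rightarrow> 'n) \<Rightarrow> bool" where
  "fin_perm \<pi> \<longleftrightarrow> bij \<pi> \<and> finite {a. \<pi> a \<noteq> a}"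

definition supports :: "(('n \<Rightarrow> 'n) \<Rightarrow> 'x \<Rightarrow> 'x) \<Rightarrow> 'n set \<Rightarrow> 'x \<Rightarrow> bool" where
  "supports act A x \<longleftrightarrow> (\<forall>\<pi>. fin_perm \<pi> \<and> (\<forall>a\<in>A. \<pi> a = a) \<longrightarrow> act \<pi> x = x)"

definition nominal_set :: "(('n \<Rightarrow> 'n) \<Rightarrow> 'x \<Rightarrow> 'x) \<Rightarrow> bool" where
  "nominal_set act \<longleftrightarrow>
     (\<forall>x. act id x = x) \<and>
     (\<forall>\<pi> \<sigma> x. fin_perm \<pi> \<and> fin_perm \<sigma> \<longrightarrow> act (\<pi> \<circ> \<sigma>) x = act \<pi> (act \<sigma> x)) \<and>
     (\<forall>x. \<exists>A. finite A \<and> supports act A x)"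

definition supp :: "(('n \<Rightarrow> 'n) \<Rightarrow> 'x \<Rightarrow> 'x) \<Rightarrow> 'x \<Rightarrow> 'n set" where
  "supp act x = \<Inter>{A. finite A \<and> supports act A x}"

definition equivariant ::
  "(('n \<Rightarrow> 'n) \<Rightarrow> 'x \<Rightarrow> 'x) \<Rightarrow> (('n \<Rightarrow> 'n) \<Rightarrow> 'y \<Rightarrow> 'y) \<Rightarrow> ('x \<Rightarrow> 'y) \<Rightarrow> bool" where
  "equivariant actX actY f \<longleftrightarrow> (\<forall>\<pi> x. fin_perm \<pi> \<longrightarrow> f (actX \<pi> x) = actY \<pi> (f x))"

definition orbit :: "(('n \<Rightarrow> 'n) \<Rightarrow> 'x \<Rightarrow> 'x) \<Rightarrow> 'x \<Rightarrow> 'x set" where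
  "orbit act x = {act \<pi> x | \<pi>. fin_perm \<pi>}"

definition orbit_finite_fibres :: "(('n \<Rightarrow> 'n) \<Rightarrow> 'x \<Rightarrow> 'x) \<Rightarrow> ('x \<Rightarrow> 'y) \<Rightarrow> bool" where
  "orbit_finite_fibres actX f \<longleftrightarrow>
     (\<forall>v. \<exists>S. finite S \<and> f -` {v} \<subseteq> \<Union> (orbit actX ` S))"

definition f_safe :: "(('n \<Rightarrow> 'n) \<Rightarrow> 'x \<Rightarrow> 'x) \<Rightarrow> ('x \<Rightarrow> 'y) \<Rightarrow> 'x \<Rightarrow> bool" where
  "f_safe actX f u \<longleftrightarrow>
     (\<forall>w. f w = f u \<longrightarrow> card (supp actX w) \<le> card (supp actX u))"

definition safe :: "(('n \<Rightarrow> 'n) \<Rightarrow> 'x \<Rightarrow> 'x) \<Rightarrow> ('x \<Rightarrow> 'y) \<Rightarrow> bool" where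
  "safe actX f \<longleftrightarrow> (\<forall>v. \<exists>u. f u = v \<and> f_safe actX f u)"

end

theory Submission
  imports Defs
begin

(* Acting by a finite permutation p transports finite supports:
   if A supports x then p ` A supports p \<cdot> x.  Since p is injective, this gives
   supp (p \<cdot> x) \<subseteq> p ` supp x, so the size of the least support cannot grow
   along an orbit.  If a fibre f\<inverse>(v) lies in the orbits of finitely many
   elements s\<^sub>1, ..., s\<^sub>k, every element of the fibre has support size at most
   max |supp s\<^sub>i|; hence only finitely many support sizes occur in the fibre.
   As f is surjective the fibre is nonempty, so some element of it realises the
   largest size, and that element is f-safe. *)

lemma fin_perm_comp:
  assumes "fin_perm p" and "fin_perm q"
  shows "fin_perm (p \<circ> q)"
proof -
  have "{a. (p \<circ> q) a \<noteq> a} \<subseteq> {a. p a \<noteq> a} \<union> {a. q a \<noteq> a}" by auto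
  then show ?thesis
    using assms bij_comp finite_subset unfolding fin_perm_def by blast
qed

lemma fin_perm_inv:
  assumes "fin_perm p"
  shows "fin_perm (inv p)"
proof -
  have bij: "bij p" using assms unfolding fin_perm_def by blast
  have "{a. inv p a \<noteq> a} \<subseteq> p ` {a. p a \<noteq> a}"
  proof
    fix a assume moved: "a \<in> {a. inv p a \<noteq> a}"
    have inv_cancel: "p (inv p a) = a" using bij by (simp add: bij_is_surj surj_f_inv_f)
    then have "inv p a \<in> {a. p a \<noteq> a}" using moved by simp
    then show "a \<in> p ` {a. p a \<noteq> a}" by (rule image_eqI[where f = p, OF inv_cancel[symmetric]])
  qed
  then show ?thesis
    using assms bij_imp_bij_inv finite_subset unfolding fin_perm_def by blast
qed

text \<open>Supports are transported by the action: if \<open>A\<close> supports \<open>x\<close> then \<open>p ` A\<close>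
  supports \<open>p \<cdot> x\<close>.  A permutation \<open>s\<close> fixing \<open>p ` A\<close> is conjugated to
  \<open>p\<inverse> \<circ> s \<circ> p\<close>, which fixes \<open>A\<close> and hence \<open>x\<close>.\<close>

lemma supports_perm:
  assumes nom: "nominal_set act" and p: "fin_perm p" and A: "supports act A x"
  shows "supports act (p ` A) (act p x)"
  unfolding supports_def
proof (intro allI impI)
  fix s assume s: "fin_perm s \<and> (\<forall>a\<in>p ` A. s a = a)"
  have bij: "bij p" using p unfolding fin_perm_def by blast
  define t where "t = inv p \<circ> s \<circ> p"
  have t: "fin_perm t"
    unfolding t_def using fin_perm_comp[OF fin_perm_comp[OF fin_perm_inv[OF p]] p] s by blast
  have "\<forall>a\<in>A. t a = a"
  proof
    fix a assume "a \<in> A"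
    then have "s (p a) = p a" using s by blast
    then show "t a = a" unfolding t_def using bij by (simp add: bij_is_inj)
  qed
  then have tx: "act t x = x" using A t unfolding supports_def by blast
  have conj: "s \<circ> p = p \<circ> t"
    unfolding t_def using bij by (simp add: fun_eq_iff bij_is_surj surj_f_inv_f)
  have comp: "\<And>a b y. fin_perm a \<Longrightarrow> fin_perm b \<Longrightarrow> act (a \<circ> b) y = act a (act b y)"
    using nom unfolding nominal_set_def by blast
  have "act s (act p x) = act (s \<circ> p) x" using comp s p by simp
  also have "\<dots> = act (p \<circ> t) x" using conj by simp
  also have "\<dots> = act p x" using comp t p tx by simp
  finally show "act s (act p x) = act p x" .
qed

lemma finite_supp:
  assumes "nominal_set act"
  shows "finite (supp act x)"
proof -
  obtain A where "finite A" "supports act A x"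
    using assms unfolding nominal_set_def by blast
  then show ?thesis unfolding supp_def by (blast intro: finite_subset)
qed

text \<open>The least support of \<open>p \<cdot> x\<close> lies inside the image of the least support of
  \<open>x\<close>; images commute with intersections since \<open>p\<close> is a bijection.\<close>

lemma supp_perm_subset:
  assumes nom: "nominal_set act" and p: "fin_perm p"
  shows "supp act (act p x) \<subseteq> p ` supp act x"
proof -
  let ?F = "{A. finite A \<and> supports act A x}"
  have "supp act (act p x) \<subseteq> (\<Inter>A\<in>?F. p ` A)"
    using supports_perm[OF nom p] unfolding supp_def by blast
  also have "\<dots> = p ` \<Inter>(id ` ?F)"
    using bij_image_INT[of p id ?F] p unfolding fin_perm_def by simp
  finally show ?thesis unfolding supp_def by simp
qed

lemma card_supp_orbit_le:
  assumes nom: "nominal_set act" and w: "w \<in> orbit act x"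
  shows "card (supp act w) \<le> card (supp act x)"
proof -
  obtain p where p: "fin_perm p" and w_eq: "w = act p x"
    using w unfolding orbit_def by blast
  have "supp act w \<subseteq> p ` supp act x"
    using supp_perm_subset[OF nom p] w_eq by simp
  then have "card (supp act w) \<le> card (p ` supp act x)"
    by (rule card_mono[OF finite_imageI[OF finite_supp[OF nom]]])
  also have "\<dots> \<le> card (supp act x)"
    using finite_supp[OF nom] by (rule card_image_le)
  finally show ?thesis .
qed

text \<open>With orbit-finite fibres, only finitely many support sizes occur in a fibre:
  they are bounded by the largest support size of the finitely many orbit
  representatives covering it.\<close>

lemma finite_supp_sizes_in_fibre:
  assumes nom: "nominal_set actX" and off: "orbit_finite_fibres actX f"
  shows "finite ((\<lambda>w. card (supp actX w)) ` (f -` {v}))"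
proof -
  have "\<exists>S. finite S \<and> f -` {v} \<subseteq> \<Union> (orbit actX ` S)"
    using off unfolding orbit_finite_fibres_def by (rule spec)
  then obtain S where S: "finite S" "f -` {v} \<subseteq> \<Union> (orbit actX ` S)"
    by (elim exE conjE)
  let ?bound = "Max ((\<lambda>s. card (supp actX s)) ` S)"
  have "(\<lambda>w. card (supp actX w)) ` (f -` {v}) \<subseteq> {..?bound}"
  proof (rule image_subsetI)
    fix w assume "w \<in> f -` {v}"
    then have "w \<in> \<Union> (orbit actX ` S)" by (rule subsetD[OF S(2)])
    then obtain s where s: "s \<in> S" "w \<in> orbit actX s" by (rule UN_E)
    have "card (supp actX w) \<le> card (supp actX s)"
      using card_supp_orbit_le[OF nom s(2)] .
    also have "\<dots> \<le> ?bound" using S(1) s(1) by simp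
    finally show "card (supp actX w) \<in> {..?bound}" by simp
  qed
  then show ?thesis using finite_atMost by (rule finite_subset)
qed

lemma safe_if_finite_supp_sizes:
  assumes surj: "surj f"
    and fin: "\<And>v. finite ((\<lambda>w. card (supp actX w)) ` (f -` {v}))"
  shows "safe actX f"
  unfolding safe_def
proof
  fix v
  let ?C = "(\<lambda>w. card (supp actX w)) ` (f -` {v})"
  obtain u0 where "f u0 = v" using surj by (metis surjD)
  then have "?C \<noteq> {}" by blast
  with fin have "Max ?C \<in> ?C" by (rule Max_in)
  then obtain u where u: "f u = v" "card (supp actX u) = Max ?C" by auto
  have "f_safe actX f u"
    unfolding f_safe_def
  proof (intro allI impI)
    fix w assume "f w = f u"
    then have "card (supp actX w) \<in> ?C" using u(1) by simp
    with fin have "card (supp actX w) \<le> Max ?C" by (rule Max_ge)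
    then show "card (supp actX w) \<le> card (supp actX u)" using u(2) by simp
  qed
  with u(1) show "\<exists>u. f u = v \<and> f_safe actX f u" by blast
qed

theorem lemma5p31:
  fixes actX :: "('n \<Rightarrow> 'n) \<Rightarrow> 'x \<Rightarrow> 'x"
    and actY :: "('n \<Rightarrow> 'n) \<Rightarrow> 'y \<Rightarrow> 'y"
    and f :: "'x \<Rightarrow> 'y"
  assumes "infinite (UNIV :: 'n set)" and "countable (UNIV :: 'n set)"
    and "nominal_set actX" and "nominal_set actY"
    and "equivariant actX actY f"
    and "surj f"
    and "orbit_finite_fibres actX f"
  shows "safe actX f"
  using assms(6) finite_supp_sizes_in_fibre[OF assms(3) assms(7)]
  by (rule safe_if_finite_supp_sizes)

end
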